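(* For any fair allocation instance with agents $a_1,\dots,a_n$, a finite set $M$ of indivisible goods, XOS valuations $v_1,\dots,v_n$, and entitlements $b_1,\dots,b_n>0$, there exists an allocation $A=(A_1,\dots,A_n)$ of $M$ such that $v_i(A_i)\ge\frac1n\mathsf{WMMS}_i$ for every agent $a_i$.
   Context: A valuation $v:2^M\to\mathbb{R}_{\ge0}$ is XOS if there is a finite collection of additive functions $\{\ell_t\}_t$ with nonnegative item values such that $v(S)=\max_t\ell_t(S)$ for all $S\subseteq M$. An allocation is a partition of $M$ into bundles $A_1,\dots,A_n$, with $A_i$ given to $a_i$. Let $\Pi_n$ be the set of partitions $(S_1,\dots,S_n)$ of $M$ into $n$ bundles. The weighted maximin share of $a_i$ is $\mathsf{WMMS}_i=\max_{S\in\Pi_n}\min_{j\in[n]}v_i(S_j)\frac{b_i}{b_j}$. *)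

theory Defs
  imports "HOL-Analysis.Analysis"
begin

text \<open>Agents are indexed by 0..<n; goods form a finite set M.
  An additive function is given by nonnegative item values l :: 'g => real,
  with l(S) = sum l S.\<close>

definition is_XOS :: "'g set \<Rightarrow> ('g set \<Rightarrow> real) \<Rightarrow> bool" where
  "is_XOS M v \<longleftrightarrow> (\<exists>L :: ('g \<Rightarrow> real) set. finite L \<and> L \<noteq> {} \<and>
      (\<forall>l\<in>L. \<forall>g\<in>M. l g \<ge> 0) \<and>
      (\<forall>S. S \<subseteq> M \<longrightarrow> v S = (MAX l\<in>L. sum l S)))"

definition is_allocation :: "nat \<Rightarrow> 'g set \<Rightarrow> (nat \<Rightarrow> 'g set) \<Rightarrow> bool" where
  "is_allocation n M A \<longleftrightarrow>
     (\<Union>i\<in>{..<n}. A i) = M \<and>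
     (\<forall>i<n. \<forall>j<n. i \<noteq> j \<longrightarrow> A i \<inter> A j = {})"

definition WMMS :: "nat \<Rightarrow> 'g set \<Rightarrow> (nat \<Rightarrow> 'g set \<Rightarrow> real) \<Rightarrow> (nat \<Rightarrow> real) \<Rightarrow> nat \<Rightarrow> real" where
  "WMMS n M v b i =
     Sup ((\<lambda>S. MIN j\<in>{..<n}. v i (S j) * b i / b j) ` {S. is_allocation n M S})"

end

theory Submission
  imports Defs
begin

(* Order the agents by decreasing entitlement and let them pick goods one at a time in round
   robin. For agents j with b_j >= b_i, the bundle S_j of a WMMS partition of agent i has value
   v_i(S_j) >= WMMS_i * b_j / b_i >= WMMS_i, and since v_i is XOS this value is l(S_j) for an
   additive l <= v_i. The agent in position p has p + 1 such pairwise disjoint bundles, while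
   only p goods are picked before its first turn, so one of them is still untouched then. The
   agent commits to it and always picks the most valuable remaining good of it. Between two of
   its turns the others take at most n - 1 goods, none worth more than its own previous pick,
   so it ends up with at least l(S_j) / n >= WMMS_i / n. *)

lemma ex_max_if_finite:
  fixes f :: "'a \<Rightarrow> 'b::linorder"
  assumes "finite R" and "R \<noteq> {}"
  shows "\<exists>g\<in>R. \<forall>h\<in>R. f h \<le> f g"
proof -
  have "Max (f ` R) \<in> f ` R" using assms by simp
  then obtain g where "g \<in> R" "f g = Max (f ` R)" by auto
  then show ?thesis using assms(1) by (metis Max_ge finite_imageI imageI)
qed

lemma card_within_Diff_singleton:
  assumes "finite J" and "disjoint_family_on F J"
  shows "card {j\<in>J. F j \<subseteq> R} \<le> Suc (card {j\<in>J. F j \<subseteq> R - {g}})"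
proof -
  have "card {j\<in>J. F j \<subseteq> R} \<le> card ({j\<in>J. F j \<subseteq> R - {g}} \<union> {j\<in>J. g \<in> F j})"
    using assms(1) by (intro card_mono) auto
  also have "\<dots> \<le> card {j\<in>J. F j \<subseteq> R - {g}} + card {j\<in>J. g \<in> F j}"
    by (rule card_Un_le)
  also have "card {j\<in>J. g \<in> F j} \<le> 1"
    using assms unfolding disjoint_family_on_def by (auto simp: card_le_Suc0_iff_eq)
  finally show ?thesis by simp
qed

lemma ex_antitone_enumeration:
  fixes b :: "nat \<Rightarrow> 'a::linorder"
  shows "\<exists>\<sigma>. bij_betw \<sigma> {..<n} {..<n} \<and> (\<forall>p<n. \<forall>q\<le>p. b (\<sigma> p) \<le> b (\<sigma> q))"
proof -
  define xs where "xs = rev (sort_key b [0..<n])"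
  have "bij_betw ((!) xs) {..<n} {..<n}"
    by (rule bij_betw_nth) (auto simp: xs_def)
  moreover have "b (xs ! p) \<le> b (xs ! q)" if "q \<le> p" and "p < n" for p q
  proof -
    have "sorted (rev (map b xs))" by (simp add: xs_def rev_map[symmetric])
    then show ?thesis using sorted_rev_nth_mono[of "map b xs" q p] that by (simp add: xs_def)
  qed
  ultimately show ?thesis by blast
qed

lemma is_allocation_subset: "is_allocation n R A \<Longrightarrow> i < n \<Longrightarrow> A i \<subseteq> R"
  by (auto simp: is_allocation_def)

lemma is_allocation_empty: "is_allocation n {} (\<lambda>_. {})"
  by (simp add: is_allocation_def)

lemma is_allocation_insert:
  assumes "is_allocation n (R - {g}) A" and "g \<in> R" and "c < n"
  shows "is_allocation n R (A(c := insert g (A c)))"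
  using assms unfolding is_allocation_def by (auto split: if_splits)

lemma is_allocation_comp_bij:
  assumes "is_allocation n M B" and "bij_betw \<tau> {..<n} {..<n}"
  shows "is_allocation n M (B \<circ> \<tau>)"
proof -
  have "(\<Union>i<n. B (\<tau> i)) = (\<Union>p\<in>\<tau> ` {..<n}. B p)" by simp
  also have "\<dots> = M"
    using assms unfolding is_allocation_def by (simp add: bij_betw_imp_surj_on)
  moreover have "B (\<tau> i) \<inter> B (\<tau> j) = {}" if "i < n" "j < n" "i \<noteq> j" for i j
  proof -
    have "\<tau> i \<noteq> \<tau> j" using assms(2) that by (auto simp: bij_betw_def dest: inj_onD)
    moreover have "\<tau> i < n" "\<tau> j < n" using assms(2) that by (auto dest: bij_betwE)
    ultimately show ?thesis using assms(1) unfolding is_allocation_def by blast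
  qed
  ultimately show ?thesis unfolding is_allocation_def by simp
qed

lemma finite_image_allocations:
  assumes "finite M" and "\<And>S S'. (\<And>j. j < n \<Longrightarrow> S j = S' j) \<Longrightarrow> f S = f S'"
  shows "finite (f ` {S. is_allocation n M S})"
proof (rule finite_subset)
  show "f ` {S. is_allocation n M S} \<subseteq> f ` PiE {..<n} (\<lambda>_. Pow M)"
  proof
    fix x assume "x \<in> f ` {S. is_allocation n M S}"
    then obtain S where S: "is_allocation n M S" and x: "x = f S" by blast
    have "restrict S {..<n} \<in> PiE {..<n} (\<lambda>_. Pow M)" using S by (auto simp: is_allocation_def)
    moreover have "f (restrict S {..<n}) = x" using x assms(2)[of "restrict S {..<n}" S] by simp
    ultimately show "x \<in> f ` PiE {..<n} (\<lambda>_. Pow M)" by blast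
  qed
  show "finite (f ` PiE {..<n} (\<lambda>_. Pow M))" using assms(1) by (simp add: finite_PiE)
qed

(* Goods picked before agent p's next turn when agent c is about to pick, the agents
   taking turns in the cyclic order 0, 1, ..., n - 1. *)
definition picks_before :: "nat \<Rightarrow> nat \<Rightarrow> nat \<Rightarrow> nat" where
  "picks_before n c p = (if c \<le> p then p - c else p + n - c)"

lemma picks_before_next_self: "c < n \<Longrightarrow> picks_before n (Suc c mod n) c = n - 1"
  by (auto simp: picks_before_def mod_if)

lemma picks_before_next:
  "c < n \<Longrightarrow> p < n \<Longrightarrow> p \<noteq> c \<Longrightarrow> picks_before n c p = Suc (picks_before n (Suc c mod n) p)"
  by (auto simp: picks_before_def mod_if)

(* x is at least the value of R minus that of d of its goods: what an agent can still secure
   from R when d goods are taken before its next turn. Quantifying over upper bounds m, rather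
   than using the maximum of w on R, keeps the notion stable when goods are removed from R. *)
definition share_bound :: "('g \<Rightarrow> real) \<Rightarrow> 'g set \<Rightarrow> nat \<Rightarrow> real \<Rightarrow> bool" where
  "share_bound w R d x \<longleftrightarrow> (\<forall>m\<ge>0. (\<forall>g\<in>R. w g \<le> m) \<longrightarrow> sum w R - real d * m \<le> x)"

lemma share_bound_empty: "0 \<le> x \<Longrightarrow> share_bound w {} d x"
  unfolding share_bound_def by (smt (verit) mult_nonneg_nonneg of_nat_0_le_iff sum.empty)

lemma share_bound_of_le: "sum w R \<le> x \<Longrightarrow> share_bound w R d x"
  unfolding share_bound_def by (smt (verit) mult_nonneg_nonneg of_nat_0_le_iff)

lemma share_bound_Suc:
  assumes "finite R" and "g \<in> R" and "share_bound w (R - {g}) d x"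
  shows "share_bound w R (Suc d) x"
  unfolding share_bound_def
proof (intro allI impI)
  fix m :: real assume "0 \<le> m" and bounded: "\<forall>h\<in>R. w h \<le> m"
  then have "sum w (R - {g}) - real d * m \<le> x"
    using assms(3) unfolding share_bound_def by simp
  moreover have "w g \<le> m" using bounded assms(2) by simp
  ultimately show "sum w R - real (Suc d) * m \<le> x"
    using assms(1,2) by (simp add: sum.remove[of R g] algebra_simps)
qed

lemma share_bound_greedy_pick:
  fixes w :: "'g \<Rightarrow> real"
  assumes "finite R" and "g \<in> R" and "\<forall>h\<in>R. 0 \<le> w h" and "\<forall>h\<in>R. w h \<le> w g"
    and "B \<subseteq> R - {g}" and "0 < n"
    and "share_bound w (R - {g}) (n - 1) (real n * sum w B)"
  shows "sum w R \<le> real n * sum w (insert g B)"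
proof -
  have "sum w (R - {g}) - (real n - 1) * w g \<le> real n * sum w B"
    using assms(2-4,6,7) unfolding share_bound_def by (simp add: of_nat_diff)
  moreover have "finite B" and "g \<notin> B" using assms(1,5) finite_subset by auto
  ultimately show ?thesis
    using assms(1,2) by (simp add: sum.remove[of R g] algebra_simps)
qed

lemma share_bound_greedy_pick_within:
  fixes u :: "'g \<Rightarrow> real" and F :: "'g set"
  defines "w \<equiv> \<lambda>h. if h \<in> F then u h else 0"
  assumes "finite R" and "g \<in> R" and "F \<subseteq> R" and "\<forall>h\<in>F. 0 \<le> u h" and "\<forall>h\<in>R. w h \<le> w g"
    and "B \<subseteq> R - {g}" and "0 < n"
    and "share_bound w (R - {g}) (n - 1) (real n * sum w B)"
  shows "sum u F \<le> real n * sum u (insert g B \<inter> F)"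
proof -
  have "sum w R \<le> real n * sum w (insert g B)"
    using assms(2-9) by (intro share_bound_greedy_pick) (auto simp: w_def)
  moreover have "sum w X = sum u (X \<inter> F)" if "finite X" for X
    using that by (simp add: w_def sum.inter_restrict)
  moreover have "finite (insert g B)" using assms(2,7) finite_subset by auto
  ultimately show ?thesis using assms(2,4) by (simp add: Int_absorb1)
qed

lemma round_robin_share:
  fixes w :: "nat \<Rightarrow> 'g \<Rightarrow> real"
  assumes "finite R" and "c < n" and "\<forall>p<n. \<forall>g\<in>R. 0 \<le> w p g"
  shows "\<exists>A. is_allocation n R A \<and>
    (\<forall>p<n. share_bound (w p) R (picks_before n c p) (real n * sum (w p) (A p)))"
  using assms
proof (induction R arbitrary: c rule: finite_remove_induct)
  case empty
  show ?case using is_allocation_empty by (fastforce intro: share_bound_empty)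
next
  case (remove R)
  obtain g where g: "g \<in> R" and g_max: "\<forall>h\<in>R. w c h \<le> w c g"
    using ex_max_if_finite[OF remove.hyps(1,2), of "w c"] by blast
  obtain A where A: "is_allocation n (R - {g}) A" and bound: "\<forall>p<n.
      share_bound (w p) (R - {g}) (picks_before n (Suc c mod n) p) (real n * sum (w p) (A p))"
    using remove.IH[OF g, of "Suc c mod n"] remove.prems by auto
  define A' where "A' = A(c := insert g (A c))"
  have "is_allocation n R A'"
    unfolding A'_def using A g remove.prems(1) by (rule is_allocation_insert)
  moreover have "share_bound (w p) R (picks_before n c p) (real n * sum (w p) (A' p))"
    if "p < n" for p
  proof (cases "p = c")
    case True
    have "sum (w c) R \<le> real n * sum (w c) (insert g (A c))"
      using remove.hyps(1) g remove.prems g_max is_allocation_subset[OF A remove.prems(1)]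
        bound[rule_format, of c] picks_before_next_self[of c n]
      by (intro share_bound_greedy_pick) auto
    then show ?thesis using True by (simp add: A'_def share_bound_of_le)
  next
    case False
    then show ?thesis
      using bound that share_bound_Suc[OF remove.hyps(1) g]
      by (simp add: A'_def picks_before_next[OF remove.prems(1) that False])
  qed
  ultimately show ?case by blast
qed

definition enough_candidates ::
    "nat \<Rightarrow> nat \<Rightarrow> (nat \<Rightarrow> 'j set) \<Rightarrow> (nat \<Rightarrow> 'j \<Rightarrow> 'g set) \<Rightarrow> 'g set \<Rightarrow> bool" where
  "enough_candidates n c J F R \<longleftrightarrow> (\<forall>p\<in>{c..<n}.
     finite (J p) \<and> disjoint_family_on (F p) (J p) \<and> p - c < card {j\<in>J p. F p j \<subseteq> R})"

lemma enough_candidates_untouched: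
  assumes "enough_candidates n c J F R" and "p \<in> {c..<n}"
  shows "\<exists>j\<in>J p. F p j \<subseteq> R"
proof -
  have "0 < card {j\<in>J p. F p j \<subseteq> R}"
    using bspec[OF assms(1)[unfolded enough_candidates_def] assms(2)] by simp
  then show ?thesis by (auto simp: card_gt_0_iff)
qed

lemma enough_candidates_Suc:
  assumes "enough_candidates n c J F R"
  shows "enough_candidates n (Suc c) J F (R - {g})"
  unfolding enough_candidates_def
proof
  fix p assume p: "p \<in> {Suc c..<n}"
  then have "finite (J p)" "disjoint_family_on (F p) (J p)"
    and "p - c < card {j\<in>J p. F p j \<subseteq> R}"
    using assms unfolding enough_candidates_def by auto
  then show "finite (J p) \<and> disjoint_family_on (F p) (J p) \<and>
      p - Suc c < card {j\<in>J p. F p j \<subseteq> R - {g}}"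
    using card_within_Diff_singleton[of "J p" "F p" R g] p by auto
qed

definition candidate_share ::
    "nat \<Rightarrow> 'g set \<Rightarrow> 'j set \<Rightarrow> ('j \<Rightarrow> 'g set) \<Rightarrow> ('j \<Rightarrow> 'g \<Rightarrow> real) \<Rightarrow> 'g set \<Rightarrow> bool" where
  "candidate_share n R J F u B \<longleftrightarrow>
     (\<exists>j\<in>J. F j \<subseteq> R \<and> sum (u j) (F j) \<le> real n * sum (u j) (B \<inter> F j))"

lemma candidate_share_mono:
  "candidate_share n R' J F u B \<Longrightarrow> R' \<subseteq> R \<Longrightarrow> candidate_share n R J F u B"
  unfolding candidate_share_def by blast

(* The invariant of the first round, when agent c is about to move: agents p < c have
   committed to one of their candidate bundles and value only its goods (w p); agents p >= c
   have not moved yet, and p - c goods will be picked before their first turn. *)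
definition first_round_guarantees ::
    "nat \<Rightarrow> nat \<Rightarrow> 'g set \<Rightarrow> (nat \<Rightarrow> 'g \<Rightarrow> real) \<Rightarrow> (nat \<Rightarrow> 'j set) \<Rightarrow>
     (nat \<Rightarrow> 'j \<Rightarrow> 'g set) \<Rightarrow> (nat \<Rightarrow> 'j \<Rightarrow> 'g \<Rightarrow> real) \<Rightarrow> (nat \<Rightarrow> 'g set) \<Rightarrow> bool" where
  "first_round_guarantees n c R w J F u A \<longleftrightarrow>
     (\<forall>p<c. share_bound (w p) R (p + n - c) (real n * sum (w p) (A p))) \<and>
     (\<forall>p\<in>{c..<n}. candidate_share n R (J p) (F p) (u p) (A p))"

lemma first_round_turn:
  fixes w :: "nat \<Rightarrow> 'g \<Rightarrow> real" and F :: "nat \<Rightarrow> 'j \<Rightarrow> 'g set"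
    and u :: "nat \<Rightarrow> 'j \<Rightarrow> 'g \<Rightarrow> real" and c :: nat and j :: 'j
  defines "w' \<equiv> w(c := \<lambda>h. if h \<in> F c j then u c j h else 0)"
  assumes "c < n" and "finite R" and "g \<in> R" and "j \<in> J c" and "F c j \<subseteq> R"
    and "\<forall>h\<in>F c j. 0 \<le> u c j h" and "\<forall>h\<in>R. w' c h \<le> w' c g"
    and A: "is_allocation n (R - {g}) A"
    and "first_round_guarantees n (Suc c) (R - {g}) w' J F u A"
  shows "first_round_guarantees n c R w J F u (A(c := insert g (A c)))"
proof -
  have committed: "\<forall>p<Suc c.
      share_bound (w' p) (R - {g}) (p + n - Suc c) (real n * sum (w' p) (A p))"
    and uncommitted: "\<forall>p\<in>{Suc c..<n}. candidate_share n (R - {g}) (J p) (F p) (u p) (A p)"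
    using assms(10) unfolding first_round_guarantees_def by auto
  have "share_bound (w p) R (p + n - c) (real n * sum (w p) (A p))" if "p < c" for p
  proof -
    have "share_bound (w p) (R - {g}) (p + n - Suc c) (real n * sum (w p) (A p))"
      using committed[rule_format, of p] that by (simp add: w'_def)
    then have "share_bound (w p) R (Suc (p + n - Suc c)) (real n * sum (w p) (A p))"
      by (rule share_bound_Suc[OF assms(3,4)])
    then show ?thesis using Suc_diff_Suc[of c "p + n"] assms(2) by simp
  qed
  moreover have "sum (u c j) (F c j) \<le> real n * sum (u c j) (insert g (A c) \<inter> F c j)"
    using assms(2-8) is_allocation_subset[OF A assms(2)] committed[rule_format, of c]
    by (intro share_bound_greedy_pick_within) (auto simp: w'_def)
  then have "candidate_share n R (J c) (F c) (u c) (insert g (A c))"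
    unfolding candidate_share_def using assms(5,6) by blast
  moreover have "candidate_share n R (J p) (F p) (u p) (A p)" if "c < p" and "p < n" for p
    using bspec[OF uncommitted, of p] that by (auto intro: candidate_share_mono)
  ultimately show ?thesis
    unfolding first_round_guarantees_def by (auto simp: order.order_iff_strict)
qed

lemma round_robin_with_commitment:
  fixes w :: "nat \<Rightarrow> 'g \<Rightarrow> real" and F :: "nat \<Rightarrow> 'j \<Rightarrow> 'g set"
    and u :: "nat \<Rightarrow> 'j \<Rightarrow> 'g \<Rightarrow> real"
  assumes "c \<le> n" and "0 < n" and "finite R"
    and "\<forall>p<c. \<forall>g\<in>R. 0 \<le> w p g"
    and "enough_candidates n c J F R"
    and "\<forall>p\<in>{c..<n}. \<forall>j\<in>J p. \<forall>g\<in>F p j. 0 \<le> u p j g"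
  shows "\<exists>A. is_allocation n R A \<and> first_round_guarantees n c R w J F u A"
  using assms
proof (induction "n - c" arbitrary: c R w)
  case 0
  then have "c = n" by simp
  then show ?case
    using round_robin_share[of R 0 n w] 0 by (auto simp: first_round_guarantees_def picks_before_def)
next
  case (Suc k)
  have "c < n" using Suc.hyps(2) by simp
  then obtain j where j: "j \<in> J c" "F c j \<subseteq> R"
    using enough_candidates_untouched[OF Suc.prems(5), of c] by auto
  show ?case
  proof (cases "R = {}")
    case True
    have "candidate_share n R (J p) (F p) (u p) {}" if "p \<in> {c..<n}" for p
      using enough_candidates_untouched[OF Suc.prems(5) that] True
      by (auto simp: candidate_share_def)
    then show ?thesis using True is_allocation_empty
      by (intro exI[of _ "\<lambda>_. {}"]) (auto simp: first_round_guarantees_def intro: share_bound_empty)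
  next
    case False
    define w' where "w' = w(c := \<lambda>g. if g \<in> F c j then u c j g else 0)"
    obtain g where g: "g \<in> R" and g_max: "\<forall>h\<in>R. w' c h \<le> w' c g"
      using ex_max_if_finite[OF Suc.prems(3) False, of "w' c"] by blast
    have "\<forall>p<Suc c. \<forall>h\<in>R - {g}. 0 \<le> w' p h"
      using Suc.prems(4,6) j \<open>c < n\<close> by (auto simp: w'_def less_Suc_eq)
    moreover have "k = n - Suc c" using Suc.hyps(2) by simp
    ultimately obtain A where A: "is_allocation n (R - {g}) A"
      and "first_round_guarantees n (Suc c) (R - {g}) w' J F u A"
      using Suc.hyps(1)[of "Suc c" "R - {g}" w'] enough_candidates_Suc[OF Suc.prems(5)]
        Suc.prems(2,3,6) \<open>c < n\<close>
      by auto
    then have "first_round_guarantees n c R w J F u (A(c := insert g (A c)))"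
      using \<open>c < n\<close> Suc.prems(3,6) g g_max j unfolding w'_def by (intro first_round_turn) auto
    moreover have "is_allocation n R (A(c := insert g (A c)))"
      using A g \<open>c < n\<close> by (rule is_allocation_insert)
    ultimately show ?thesis by blast
  qed
qed

lemma enough_candidates_heavier:
  fixes b :: "nat \<Rightarrow> 'a::linorder"
  assumes \<sigma>: "bij_betw \<sigma> {..<n} {..<n}" and antitone: "\<forall>p<n. \<forall>q\<le>p. b (\<sigma> p) \<le> b (\<sigma> q)"
    and "\<And>i. i < n \<Longrightarrow> disjoint_family_on (S i) {..<n}"
    and "\<And>i j. i < n \<Longrightarrow> j < n \<Longrightarrow> S i j \<subseteq> M"
  shows "enough_candidates n 0 (\<lambda>p. {j. j < n \<and> b (\<sigma> p) \<le> b j}) (\<lambda>p. S (\<sigma> p)) M"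
  unfolding enough_candidates_def
proof
  fix p assume "p \<in> {0..<n}"
  then have p: "p < n" by simp
  have \<sigma>_less: "\<sigma> q < n" if "q \<le> p" for q using \<sigma> that p by (auto dest: bij_betwE)
  define J where "J = {j. j < n \<and> b (\<sigma> p) \<le> b j}"
  have "disjoint_family_on (S (\<sigma> p)) J"
    using assms(3)[OF \<sigma>_less[OF order.refl]]
    by (rule disjoint_family_on_mono[rotated]) (auto simp: J_def)
  moreover have "\<sigma> q \<in> {j\<in>J. S (\<sigma> p) j \<subseteq> M}" if "q \<le> p" for q
    using antitone p that \<sigma>_less[OF that] assms(4)[OF \<sigma>_less[OF order.refl]] by (simp add: J_def)
  then have "\<sigma> ` {..p} \<subseteq> {j\<in>J. S (\<sigma> p) j \<subseteq> M}" by auto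
  then have "card (\<sigma> ` {..p}) \<le> card {j\<in>J. S (\<sigma> p) j \<subseteq> M}"
    by (rule card_mono[rotated]) (simp add: J_def)
  moreover have "inj_on \<sigma> {..p}"
    using \<sigma> p by (auto simp: bij_betw_def intro: inj_on_subset)
  then have "card (\<sigma> ` {..p}) = Suc p" by (simp add: card_image)
  ultimately show "finite J \<and> disjoint_family_on (S (\<sigma> p)) J \<and>
      p - 0 < card {j\<in>J. S (\<sigma> p) j \<subseteq> M}"
    by (simp add: J_def)
qed

lemma ex_allocation_share_of_heavier_bundle:
  fixes b :: "nat \<Rightarrow> 'a::linorder" and S :: "nat \<Rightarrow> nat \<Rightarrow> 'g set"
    and u :: "nat \<Rightarrow> nat \<Rightarrow> 'g \<Rightarrow> real"
  assumes "0 < n" and "finite M"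
    and "\<And>i. i < n \<Longrightarrow> disjoint_family_on (S i) {..<n}"
    and "\<And>i j. i < n \<Longrightarrow> j < n \<Longrightarrow> S i j \<subseteq> M"
    and "\<And>i j g. i < n \<Longrightarrow> j < n \<Longrightarrow> g \<in> S i j \<Longrightarrow> 0 \<le> u i j g"
  shows "\<exists>A. is_allocation n M A \<and> (\<forall>i<n. \<exists>j<n. b i \<le> b j \<and>
           sum (u i j) (S i j) \<le> real n * sum (u i j) (A i \<inter> S i j))"
proof -
  obtain \<sigma> where \<sigma>: "bij_betw \<sigma> {..<n} {..<n}" and antitone: "\<forall>p<n. \<forall>q\<le>p. b (\<sigma> p) \<le> b (\<sigma> q)"
    using ex_antitone_enumeration by blast
  define J where "J = (\<lambda>p. {j. j < n \<and> b (\<sigma> p) \<le> b j})"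
  have "enough_candidates n 0 J (\<lambda>p. S (\<sigma> p)) M"
    unfolding J_def by (rule enough_candidates_heavier[where S = S, OF \<sigma> antitone assms(3,4)])
  moreover have "\<forall>p\<in>{0..<n}. \<forall>j\<in>J p. \<forall>g\<in>S (\<sigma> p) j. 0 \<le> u (\<sigma> p) j g"
    using assms(5) \<sigma> by (auto simp: J_def dest: bij_betwE)
  ultimately obtain B where B: "is_allocation n M B"
    and share: "\<forall>p\<in>{0..<n}. candidate_share n M (J p) (S (\<sigma> p)) (u (\<sigma> p)) (B p)"
    using round_robin_with_commitment[of 0 n M "\<lambda>_ _. 0" J "\<lambda>p. S (\<sigma> p)" "\<lambda>p. u (\<sigma> p)"]
      assms(1,2)
    by (auto simp: first_round_guarantees_def)
  define \<tau> where "\<tau> = inv_into {..<n} \<sigma>"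
  have \<tau>: "bij_betw \<tau> {..<n} {..<n}" using \<sigma> by (simp add: \<tau>_def bij_betw_inv_into)
  have "\<exists>j<n. b i \<le> b j \<and> sum (u i j) (S i j) \<le> real n * sum (u i j) ((B \<circ> \<tau>) i \<inter> S i j)"
    if "i < n" for i
  proof -
    have "\<tau> i \<in> {0..<n}" using \<tau> that by (auto dest: bij_betwE)
    moreover have inv: "\<sigma> (\<tau> i) = i" using \<sigma> that by (simp add: \<tau>_def bij_betw_inv_into_right)
    ultimately obtain j where "j \<in> J (\<tau> i)"
      and "sum (u i j) (S i j) \<le> real n * sum (u i j) (B (\<tau> i) \<inter> S i j)"
      using share unfolding candidate_share_def by metis
    then show ?thesis using inv by (auto simp: J_def)
  qed
  then show ?thesis using is_allocation_comp_bij[OF B \<tau>] by blast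
qed

lemma is_XOS_supporting_additive:
  assumes "is_XOS M v" and "S \<subseteq> M"
  shows "\<exists>l. (\<forall>g\<in>M. 0 \<le> l g) \<and> sum l S = v S \<and> (\<forall>T\<subseteq>M. sum l T \<le> v T)"
proof -
  obtain L where L: "finite L" "L \<noteq> {}" "\<forall>l\<in>L. \<forall>g\<in>M. 0 \<le> l g"
    and v: "\<forall>T. T \<subseteq> M \<longrightarrow> v T = (MAX l\<in>L. sum l T)"
    using assms(1) unfolding is_XOS_def by blast
  have "(MAX l\<in>L. sum l S) \<in> (\<lambda>l. sum l S) ` L" using L(1,2) by simp
  then obtain l where l: "l \<in> L" "sum l S = v S" using v assms(2) by auto
  moreover have "sum l T \<le> v T" if "T \<subseteq> M" for T using v that L(1) l(1) by simp
  ultimately show ?thesis using L(3) by blast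
qed

lemma WMMS_attained:
  assumes "finite M" and "0 < n"
  shows "\<exists>S. is_allocation n M S \<and> (\<forall>j<n. WMMS n M v b i \<le> v i (S j) * b i / b j)"
proof -
  define f where "f = (\<lambda>S :: nat \<Rightarrow> 'a set. MIN j\<in>{..<n}. v i (S j) * b i / b j)"
  define V where "V = f ` {S. is_allocation n M S}"
  have "finite V"
    unfolding V_def using assms(1) by (rule finite_image_allocations) (simp add: f_def)
  moreover have "is_allocation n M (\<lambda>j. if j = 0 then M else {})"
    using assms(2) by (auto simp: is_allocation_def)
  then have "V \<noteq> {}" by (auto simp: V_def)
  ultimately have "WMMS n M v b i \<in> V"
    by (simp add: WMMS_def V_def f_def cSup_eq_Max)
  then obtain S where "is_allocation n M S" and "WMMS n M v b i = f S" by (auto simp: V_def)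
  moreover have "f S \<le> v i (S j) * b i / b j" if "j < n" for j using that by (simp add: f_def)
  ultimately show ?thesis by auto
qed

lemma XOS_WMMS_partitions:
  assumes "finite M" and "0 < n" and "\<And>i. i < n \<Longrightarrow> is_XOS M (v i)"
    and "\<And>i. i < n \<Longrightarrow> 0 < b i"
  obtains S u where "\<And>i. i < n \<Longrightarrow> disjoint_family_on (S i) {..<n}"
    and "\<And>i j. i < n \<Longrightarrow> j < n \<Longrightarrow> S i j \<subseteq> M"
    and "\<And>i j g. i < n \<Longrightarrow> j < n \<Longrightarrow> g \<in> M \<Longrightarrow> 0 \<le> u i j g"
    and "\<And>i j T. i < n \<Longrightarrow> j < n \<Longrightarrow> T \<subseteq> M \<Longrightarrow> sum (u i j) T \<le> v i T"
    and "\<And>i j. i < n \<Longrightarrow> j < n \<Longrightarrow> b i \<le> b j \<Longrightarrow> WMMS n M v b i \<le> sum (u i j) (S i j)"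
proof -
  define S where "S i = (SOME S. is_allocation n M S \<and>
    (\<forall>j<n. WMMS n M v b i \<le> v i (S j) * b i / b j))" for i
  have S: "is_allocation n M (S i) \<and> (\<forall>j<n. WMMS n M v b i \<le> v i (S i j) * b i / b j)" for i
    using someI_ex[OF WMMS_attained[OF assms(1,2), of v b i]] by (simp add: S_def)
  then have S_sub: "S i j \<subseteq> M" if "j < n" for i j using is_allocation_subset that by blast
  define u where "u i j = (SOME l. (\<forall>g\<in>M. 0 \<le> l g) \<and> sum l (S i j) = v i (S i j) \<and>
    (\<forall>T\<subseteq>M. sum l T \<le> v i T))" for i j
  have u: "(\<forall>g\<in>M. 0 \<le> u i j g) \<and> sum (u i j) (S i j) = v i (S i j) \<and> (\<forall>T\<subseteq>M. sum (u i j) T \<le> v i T)"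
    if "i < n" and "j < n" for i j
    using someI_ex[OF is_XOS_supporting_additive[OF assms(3)[OF that(1)] S_sub[OF that(2)]]]
    by (simp add: u_def)
  have "disjoint_family_on (S i) {..<n}" for i
    using S[of i] by (auto simp: is_allocation_def disjoint_family_on_def)
  moreover have "WMMS n M v b i \<le> sum (u i j) (S i j)" if "i < n" "j < n" "b i \<le> b j" for i j
  proof -
    have "0 \<le> sum (u i j) (S i j)"
      using u[OF that(1,2)] S_sub[OF that(2)] by (intro sum_nonneg) auto
    then have "0 \<le> v i (S i j)" using u[OF that(1,2)] by simp
    moreover have "b i / b j \<le> 1" using assms(4)[OF that(1)] that(3) by simp
    ultimately have "v i (S i j) * b i / b j \<le> v i (S i j)"
      using mult_left_le by (metis times_divide_eq_right)
    then show ?thesis using S[of i] u[OF that(1,2)] that(2) by fastforce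
  qed
  ultimately show ?thesis using that S_sub u by blast
qed

theorem theorem3:
  fixes n :: nat and M :: "'g set" and v :: "nat \<Rightarrow> 'g set \<Rightarrow> real" and b :: "nat \<Rightarrow> real"
  assumes "n \<ge> 1"
    and "finite M"
    and "\<And>i. i < n \<Longrightarrow> is_XOS M (v i)"
    and "\<And>i. i < n \<Longrightarrow> b i > 0"
  shows "\<exists>A. is_allocation n M A \<and>
           (\<forall>i<n. v i (A i) \<ge> WMMS n M v b i / real n)"
proof -
  have n: "0 < n" using assms(1) by simp
  obtain S u where S_disj: "\<And>i. i < n \<Longrightarrow> disjoint_family_on (S i) {..<n}"
    and S_sub: "\<And>i j. i < n \<Longrightarrow> j < n \<Longrightarrow> S i j \<subseteq> M"
    and u_nonneg: "\<And>i j g. i < n \<Longrightarrow> j < n \<Longrightarrow> g \<in> M \<Longrightarrow> 0 \<le> u i j g"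
    and u_le_v: "\<And>i j T. i < n \<Longrightarrow> j < n \<Longrightarrow> T \<subseteq> M \<Longrightarrow> sum (u i j) T \<le> v i T"
    and wmms: "\<And>i j. i < n \<Longrightarrow> j < n \<Longrightarrow> b i \<le> b j \<Longrightarrow> WMMS n M v b i \<le> sum (u i j) (S i j)"
    using XOS_WMMS_partitions[where v = v and b = b, OF assms(2) n assms(3,4)] by blast
  have "0 \<le> u i j g" if "i < n" "j < n" "g \<in> S i j" for i j g
    using u_nonneg[OF that(1,2)] S_sub[OF that(1,2)] that(3) by blast
  then obtain A where A: "is_allocation n M A" and share: "\<forall>i<n. \<exists>j<n. b i \<le> b j \<and>
      sum (u i j) (S i j) \<le> real n * sum (u i j) (A i \<inter> S i j)"
    using ex_allocation_share_of_heavier_bundle[where b = b and S = S and u = u,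
        OF n assms(2) S_disj S_sub]
    by blast
  have "WMMS n M v b i \<le> real n * v i (A i)" if i: "i < n" for i
  proof -
    obtain j where j: "j < n" "b i \<le> b j"
      and share_j: "sum (u i j) (S i j) \<le> real n * sum (u i j) (A i \<inter> S i j)"
      using share i by blast
    have A_i: "A i \<subseteq> M" using is_allocation_subset[OF A i] .
    have "WMMS n M v b i \<le> sum (u i j) (S i j)" using wmms[OF i j] .
    also have "\<dots> \<le> real n * sum (u i j) (A i \<inter> S i j)" by (rule share_j)
    also have "\<dots> \<le> real n * sum (u i j) (A i)"
      using A_i u_nonneg[OF i j(1)] finite_subset[OF A_i assms(2)]
      by (intro mult_left_mono sum_mono2) auto
    also have "\<dots> \<le> real n * v i (A i)"
      using u_le_v[OF i j(1) A_i] by (intro mult_left_mono) simp_all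
    finally show ?thesis .
  qed
  then show ?thesis using A n by (auto simp: divide_le_eq mult.commute)
qed

end
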